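(* Let $0<t<1$ and $\alpha>0$. Define $H^{t}:\mathbb{R}\to\mathbb{R}$ by $H^{t}(p)=0$ if $p=0$, $H^{t}(p)=t$ if $0<|p|\le 1$, and $H^{t}(p)=1$ if $|p|>1$. Let $x\in\mathbb{R}$ with $|x|\ge 1$, and consider $E(p)=(x-p)^{2}+\alpha H^{t}(p)$ for $p\in\mathbb{R}$. Then a global minimizer of $E$ over $p\in\mathbb{R}$ is given as follows. (i) If $\alpha>\frac{2-t+2\sqrt{1-t}}{t^{2}}$: $p=0$ if $|x|\le\sqrt{\alpha}$, and $p=x$ if $|x|>\sqrt{\alpha}$. (ii) If $\frac{2-t+2\sqrt{1-t}}{t^{2}}\ge\alpha\ge\frac{2-t-2\sqrt{1-t}}{t^{2}}$: $p=0$ if $|x|\le\frac{1+\alpha t}{2}$; $p=\operatorname{sgn}(x)$ if $\frac{1+\alpha t}{2}<|x|\le 1+\sqrt{\alpha(1-t)}$; and $p=x$ if $|x|>1+\sqrt{\alpha(1-t)}$. (iii) If $\frac{2-t-2\sqrt{1-t}}{t^{2}}>\alpha>0$: $p=\operatorname{sgn}(x)$ if $1\le|x|\le 1+\sqrt{\alpha(1-t)}$, and $p=x$ if $|x|>1+\sqrt{\alpha(1-t)}$.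
   Context: $\operatorname{sgn}(x)$ denotes the sign of $x$ ($1$ if $x>0$, $-1$ if $x<0$). The function $H^{t}$ is the per-entry penalty of the "$l_0^t$ measure", which counts entries of absolute value greater than $1$ with weight $1$ and nonzero entries of absolute value at most $1$ with weight $t$. *)

theory Defs
  imports Complex_Main
begin

definition Ht :: "real \<Rightarrow> real \<Rightarrow> real" where
  "Ht t p = (if p = 0 then 0 else if \<bar>p\<bar> \<le> 1 then t else 1)"

definition Eng :: "real \<Rightarrow> real \<Rightarrow> real \<Rightarrow> real \<Rightarrow> real" where
  "Eng t \<alpha> x p = (x - p)^2 + \<alpha> * Ht t p"

definition is_global_min :: "(real \<Rightarrow> real) \<Rightarrow> real \<Rightarrow> bool" where
  "is_global_min f p \<longleftrightarrow> (\<forall>q. f p \<le> f q)"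

end

theory Submission
  imports Defs
begin

text \<open>
  For \<open>\<bar>x\<bar> \<ge> 1\<close> each of the three pieces of \<open>H\<^sup>t\<close> has a best candidate: \<open>p = 0\<close> with energy
  \<open>x\<^sup>2\<close>, \<open>p = sgn x\<close> with energy \<open>(\<bar>x\<bar> - 1)\<^sup>2 + \<alpha> t\<close>, and \<open>p = x\<close> with energy \<open>\<alpha>\<close>
  (for \<open>\<bar>x\<bar> = 1\<close> the last value is only an infimum). So a candidate is a global minimiser as
  soon as its energy is below the other two, and the three pairwise comparisons read
  \<open>\<bar>x\<bar> \<le> (1 + \<alpha> t)/2\<close>, \<open>\<bar>x\<bar> \<le> \<surd>\<alpha>\<close> and \<open>\<bar>x\<bar> \<le> 1 + \<surd>(\<alpha>(1 - t))\<close>. With \<open>s = \<surd>\<alpha>\<close> and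
  \<open>r = \<surd>(1 - t)\<close> one has \<open>\<alpha> t - 2 s + 1 = (s (1 - r) - 1) (s (1 + r) - 1)\<close>, and the two thresholds
  on \<open>\<alpha>\<close> are exactly where the factors change sign; the sign pattern orders the three
  comparison values and yields the three regimes.
\<close>

lemma Eng_zero: "Eng t \<alpha> x 0 = x\<^sup>2"
  by (simp add: Eng_def Ht_def)

lemma Eng_sgn:
  assumes "x \<noteq> 0"
  shows "Eng t \<alpha> x (sgn x) = (\<bar>x\<bar> - 1)\<^sup>2 + \<alpha> * t"
  using assms by (cases "x > 0") (auto simp: Eng_def Ht_def power2_eq_square algebra_simps)

lemma Eng_self:
  assumes "1 < \<bar>x\<bar>"
  shows "Eng t \<alpha> x x = \<alpha>"
  using assms by (auto simp: Eng_def Ht_def)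

lemma Eng_ge_min_candidates:
  assumes "1 \<le> \<bar>x\<bar>"
  shows "min (x\<^sup>2) (min ((\<bar>x\<bar> - 1)\<^sup>2 + \<alpha> * t) \<alpha>) \<le> Eng t \<alpha> x q"
proof -
  consider "q = 0" | "q \<noteq> 0" "\<bar>q\<bar> \<le> 1" | "1 < \<bar>q\<bar>" by linarith
  then show ?thesis
  proof cases
    case 2
    have "\<bar>x\<bar> - 1 \<le> \<bar>x - q\<bar>" using 2 by linarith
    then have "(\<bar>x\<bar> - 1)\<^sup>2 \<le> (x - q)\<^sup>2"
      using assms power_mono[of "\<bar>x\<bar> - 1" "\<bar>x - q\<bar>" 2] by simp
    then show ?thesis using 2 by (simp add: Eng_def Ht_def)
  next
    case 3
    then have "\<alpha> \<le> Eng t \<alpha> x q" by (auto simp: Eng_def Ht_def)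
    then show ?thesis by simp
  qed (simp add: Eng_def Ht_def)
qed

lemma is_global_min_EngI:
  assumes "1 \<le> \<bar>x\<bar>"
    and "Eng t \<alpha> x p \<le> x\<^sup>2"
    and "Eng t \<alpha> x p \<le> (\<bar>x\<bar> - 1)\<^sup>2 + \<alpha> * t"
    and "Eng t \<alpha> x p \<le> \<alpha>"
  shows "is_global_min (Eng t \<alpha> x) p"
  unfolding is_global_min_def
  using assms Eng_ge_min_candidates[OF assms(1)] by (meson min.boundedI order_trans)

lemma sgn_le_self_iff:
  assumes "1 \<le> \<bar>x\<bar>"
  shows "(\<bar>x\<bar> - 1)\<^sup>2 + \<alpha> * t \<le> \<alpha> \<longleftrightarrow> \<bar>x\<bar> \<le> 1 + sqrt (\<alpha> * (1 - t))"
proof -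
  have "(\<bar>x\<bar> - 1)\<^sup>2 + \<alpha> * t \<le> \<alpha> \<longleftrightarrow> (\<bar>x\<bar> - 1)\<^sup>2 \<le> \<alpha> * (1 - t)"
    by (simp add: algebra_simps)
  also have "\<dots> \<longleftrightarrow> \<bar>x\<bar> - 1 \<le> sqrt (\<alpha> * (1 - t))"
    using assms real_le_rsqrt sqrt_ge_absD[of "\<bar>x\<bar> - 1"] by force
  finally show ?thesis by linarith
qed

lemma is_global_min_Eng_zero:
  assumes "1 \<le> \<bar>x\<bar>" "\<bar>x\<bar> \<le> sqrt \<alpha>" "2 * \<bar>x\<bar> - 1 \<le> \<alpha> * t"
  shows "is_global_min (Eng t \<alpha> x) 0"
proof (rule is_global_min_EngI)
  show "Eng t \<alpha> x 0 \<le> \<alpha>"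
    using sqrt_ge_absD[OF assms(2)] by (simp add: Eng_zero)
  show "Eng t \<alpha> x 0 \<le> (\<bar>x\<bar> - 1)\<^sup>2 + \<alpha> * t"
    using assms by (simp add: Eng_zero power2_eq_square algebra_simps)
qed (use assms in \<open>simp_all add: Eng_zero\<close>)

lemma is_global_min_Eng_sgn:
  assumes "1 \<le> \<bar>x\<bar>" "\<alpha> * t \<le> 2 * \<bar>x\<bar> - 1" "\<bar>x\<bar> \<le> 1 + sqrt (\<alpha> * (1 - t))"
  shows "is_global_min (Eng t \<alpha> x) (sgn x)"
proof (rule is_global_min_EngI)
  have "x \<noteq> 0" using assms(1) by auto
  then show "Eng t \<alpha> x (sgn x) \<le> x\<^sup>2"
    using assms(2) by (simp add: Eng_sgn power2_eq_square algebra_simps)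
  show "Eng t \<alpha> x (sgn x) \<le> \<alpha>"
    using \<open>x \<noteq> 0\<close> assms sgn_le_self_iff by (simp add: Eng_sgn)
qed (use assms in \<open>auto simp: Eng_sgn\<close>)

lemma is_global_min_Eng_self:
  assumes "1 < \<bar>x\<bar>" "sqrt \<alpha> \<le> \<bar>x\<bar>" "1 + sqrt (\<alpha> * (1 - t)) \<le> \<bar>x\<bar>"
  shows "is_global_min (Eng t \<alpha> x) x"
proof (rule is_global_min_EngI)
  show "Eng t \<alpha> x x \<le> x\<^sup>2"
    using sqrt_le_D[OF assms(2)] assms(1) by (simp add: Eng_self)
  have "\<alpha> * (1 - t) \<le> (\<bar>x\<bar> - 1)\<^sup>2"
    using assms(3) by (intro sqrt_le_D) simp
  then show "Eng t \<alpha> x x \<le> (\<bar>x\<bar> - 1)\<^sup>2 + \<alpha> * t"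
    using assms(1) by (simp add: Eng_self algebra_simps)
qed (use assms in \<open>simp_all add: Eng_self\<close>)

lemma penalty_thresholds:
  assumes "0 < t" "t \<le> 1"
  shows "(2 - t + 2 * sqrt (1 - t)) / t\<^sup>2 = (1 / (1 - sqrt (1 - t)))\<^sup>2"
    and "(2 - t - 2 * sqrt (1 - t)) / t\<^sup>2 = (1 / (1 + sqrt (1 - t)))\<^sup>2"
proof -
  define r where "r = sqrt (1 - t)"
  have "r\<^sup>2 = 1 - t" "r < 1" "0 \<le> r" using assms by (auto simp: r_def)
  then have t: "t = (1 - r) * (1 + r)" by (simp add: power2_eq_square algebra_simps)
  have "2 - t + 2 * r = (1 + r)\<^sup>2" "2 - t - 2 * r = (1 - r)\<^sup>2" "t\<^sup>2 = (1 - r)\<^sup>2 * (1 + r)\<^sup>2"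
    unfolding t by (simp_all add: power2_eq_square algebra_simps)
  with \<open>r < 1\<close> \<open>0 \<le> r\<close>
  show "(2 - t + 2 * sqrt (1 - t)) / t\<^sup>2 = (1 / (1 - sqrt (1 - t)))\<^sup>2"
    and "(2 - t - 2 * sqrt (1 - t)) / t\<^sup>2 = (1 / (1 + sqrt (1 - t)))\<^sup>2"
    unfolding r_def[symmetric] by (simp_all add: power_divide)
qed

lemma inverse_square_less_iff:
  assumes "0 < c"
  shows "(1 / c)\<^sup>2 < \<alpha> \<longleftrightarrow> 1 < sqrt \<alpha> * c"
proof -
  have "(1 / c)\<^sup>2 < \<alpha> \<longleftrightarrow> 1 / c < sqrt \<alpha>"
    using assms real_sqrt_less_iff[of "(1 / c)\<^sup>2" \<alpha>] by simp
  also have "\<dots> \<longleftrightarrow> 1 < sqrt \<alpha> * c"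
    using assms by (simp add: divide_less_eq)
  finally show ?thesis .
qed

lemma inverse_square_le_iff:
  assumes "0 < c"
  shows "(1 / c)\<^sup>2 \<le> \<alpha> \<longleftrightarrow> 1 \<le> sqrt \<alpha> * c"
proof -
  have "(1 / c)\<^sup>2 \<le> \<alpha> \<longleftrightarrow> 1 / c \<le> sqrt \<alpha>"
    using assms real_sqrt_le_iff[of "(1 / c)\<^sup>2" \<alpha>] by simp
  also have "\<dots> \<longleftrightarrow> 1 \<le> sqrt \<alpha> * c"
    using assms by (simp add: divide_le_eq)
  finally show ?thesis .
qed

lemma penalty_discriminant_factor:
  assumes "0 \<le> \<alpha>" "t \<le> 1"
  shows "\<alpha> * t - 2 * sqrt \<alpha> + 1
    = (sqrt \<alpha> * (1 - sqrt (1 - t)) - 1) * (sqrt \<alpha> * (1 + sqrt (1 - t)) - 1)"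
proof -
  have "(sqrt \<alpha>)\<^sup>2 = \<alpha>" "(sqrt (1 - t))\<^sup>2 = 1 - t" using assms by simp_all
  then show ?thesis by (simp add: power2_eq_square algebra_simps)
qed

lemma global_min_large_penalty:
  assumes "1 \<le> \<bar>x\<bar>" "0 \<le> \<alpha>" "t \<le> 1" "1 < sqrt \<alpha> * (1 - sqrt (1 - t))"
  shows "(\<bar>x\<bar> \<le> sqrt \<alpha> \<longrightarrow> is_global_min (Eng t \<alpha> x) 0) \<and>
         (sqrt \<alpha> < \<bar>x\<bar> \<longrightarrow> is_global_min (Eng t \<alpha> x) x)"
proof -
  define s r where "s = sqrt \<alpha>" and "r = sqrt (1 - t)"
  have "0 \<le> s * r" "sqrt (\<alpha> * (1 - t)) = s * r"
    using assms by (simp_all add: s_def r_def real_sqrt_mult)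
  have "1 + s * r < s" using assms(4) by (simp add: s_def r_def algebra_simps)
  then have "0 < (s * (1 - r) - 1) * (s * (1 + r) - 1)"
    using \<open>0 \<le> s * r\<close> by (intro mult_pos_pos) (auto simp: algebra_simps)
  then have "2 * s - 1 < \<alpha> * t"
    using penalty_discriminant_factor[OF assms(2,3)] by (simp add: s_def r_def)
  show ?thesis
  proof (intro conjI impI)
    assume "\<bar>x\<bar> \<le> sqrt \<alpha>"
    with \<open>2 * s - 1 < \<alpha> * t\<close> show "is_global_min (Eng t \<alpha> x) 0"
      using assms(1) by (intro is_global_min_Eng_zero) (auto simp: s_def)
  next
    assume "sqrt \<alpha> < \<bar>x\<bar>"
    with \<open>1 + s * r < s\<close> \<open>0 \<le> s * r\<close> show "is_global_min (Eng t \<alpha> x) x"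
      by (intro is_global_min_Eng_self) (auto simp: s_def \<open>sqrt (\<alpha> * (1 - t)) = s * r\<close>)
  qed
qed

lemma global_min_medium_penalty:
  assumes "1 \<le> \<bar>x\<bar>" "0 \<le> \<alpha>" "t \<le> 1"
    and "sqrt \<alpha> * (1 - sqrt (1 - t)) \<le> 1" "1 \<le> sqrt \<alpha> * (1 + sqrt (1 - t))"
  shows "(\<bar>x\<bar> \<le> (1 + \<alpha> * t) / 2 \<longrightarrow> is_global_min (Eng t \<alpha> x) 0) \<and>
         ((1 + \<alpha> * t) / 2 < \<bar>x\<bar> \<and> \<bar>x\<bar> \<le> 1 + sqrt (\<alpha> * (1 - t))
            \<longrightarrow> is_global_min (Eng t \<alpha> x) (sgn x)) \<and>
         (1 + sqrt (\<alpha> * (1 - t)) < \<bar>x\<bar> \<longrightarrow> is_global_min (Eng t \<alpha> x) x)"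
proof -
  define s r where "s = sqrt \<alpha>" and "r = sqrt (1 - t)"
  have "0 \<le> s * r" "sqrt (\<alpha> * (1 - t)) = s * r"
    using assms by (simp_all add: s_def r_def real_sqrt_mult)
  have "s * (1 - r) \<le> 1" "1 \<le> s * (1 + r)" using assms(4,5) by (simp_all add: s_def r_def)
  then have "(s * (1 - r) - 1) * (s * (1 + r) - 1) \<le> 0"
    by (intro mult_nonpos_nonneg) auto
  then have "1 + \<alpha> * t \<le> 2 * s"
    using penalty_discriminant_factor[OF assms(2,3)] by (simp add: s_def r_def)
  have "s \<le> 1 + s * r" using \<open>s * (1 - r) \<le> 1\<close> by (simp add: algebra_simps)
  show ?thesis
  proof (intro conjI impI)
    assume "\<bar>x\<bar> \<le> (1 + \<alpha> * t) / 2"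
    with \<open>1 + \<alpha> * t \<le> 2 * s\<close> show "is_global_min (Eng t \<alpha> x) 0"
      using assms(1) by (intro is_global_min_Eng_zero) (auto simp: s_def)
  next
    assume "(1 + \<alpha> * t) / 2 < \<bar>x\<bar> \<and> \<bar>x\<bar> \<le> 1 + sqrt (\<alpha> * (1 - t))"
    then show "is_global_min (Eng t \<alpha> x) (sgn x)"
      using assms(1) by (intro is_global_min_Eng_sgn) auto
  next
    assume "1 + sqrt (\<alpha> * (1 - t)) < \<bar>x\<bar>"
    with \<open>s \<le> 1 + s * r\<close> \<open>0 \<le> s * r\<close> show "is_global_min (Eng t \<alpha> x) x"
      by (intro is_global_min_Eng_self) (auto simp: s_def \<open>sqrt (\<alpha> * (1 - t)) = s * r\<close>)
  qed
qed

lemma global_min_small_penalty: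
  assumes "1 \<le> \<bar>x\<bar>" "0 \<le> \<alpha>" "t \<le> 1" "sqrt \<alpha> * (1 + sqrt (1 - t)) < 1"
  shows "(\<bar>x\<bar> \<le> 1 + sqrt (\<alpha> * (1 - t)) \<longrightarrow> is_global_min (Eng t \<alpha> x) (sgn x)) \<and>
         (1 + sqrt (\<alpha> * (1 - t)) < \<bar>x\<bar> \<longrightarrow> is_global_min (Eng t \<alpha> x) x)"
proof -
  have "0 \<le> sqrt \<alpha> * sqrt (1 - t)" using assms(2,3) by simp
  then have "sqrt \<alpha> < 1" using assms(4) unfolding distrib_left mult_1_right by linarith
  then have "\<alpha> * t < 1"
    using assms(2,3) mult_left_le[of t \<alpha>] by simp
  show ?thesis
  proof (intro conjI impI)
    assume "\<bar>x\<bar> \<le> 1 + sqrt (\<alpha> * (1 - t))"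
    with \<open>\<alpha> * t < 1\<close> show "is_global_min (Eng t \<alpha> x) (sgn x)"
      using assms(1) by (intro is_global_min_Eng_sgn) auto
  next
    assume "1 + sqrt (\<alpha> * (1 - t)) < \<bar>x\<bar>"
    moreover have "0 \<le> sqrt (\<alpha> * (1 - t))" using assms(2,3) by simp
    ultimately show "is_global_min (Eng t \<alpha> x) x"
      using \<open>sqrt \<alpha> < 1\<close> by (intro is_global_min_Eng_self) linarith+
  qed
qed

theorem theorem3p2:
  fixes t \<alpha> x :: real
  assumes "0 < t" "t < 1" "\<alpha> > 0" "\<bar>x\<bar> \<ge> 1"
  shows
   "(\<alpha> > (2 - t + 2 * sqrt (1 - t)) / t^2 \<longrightarrow>
       (\<bar>x\<bar> \<le> sqrt \<alpha> \<longrightarrow> is_global_min (Eng t \<alpha> x) 0) \<and>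
       (\<bar>x\<bar> > sqrt \<alpha> \<longrightarrow> is_global_min (Eng t \<alpha> x) x))
    \<and>
    ((2 - t + 2 * sqrt (1 - t)) / t^2 \<ge> \<alpha> \<and> \<alpha> \<ge> (2 - t - 2 * sqrt (1 - t)) / t^2 \<longrightarrow>
       (\<bar>x\<bar> \<le> (1 + \<alpha> * t) / 2 \<longrightarrow> is_global_min (Eng t \<alpha> x) 0) \<and>
       ((1 + \<alpha> * t) / 2 < \<bar>x\<bar> \<and> \<bar>x\<bar> \<le> 1 + sqrt (\<alpha> * (1 - t))
          \<longrightarrow> is_global_min (Eng t \<alpha> x) (sgn x)) \<and>
       (\<bar>x\<bar> > 1 + sqrt (\<alpha> * (1 - t)) \<longrightarrow> is_global_min (Eng t \<alpha> x) x))
    \<and>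
    ((2 - t - 2 * sqrt (1 - t)) / t^2 > \<alpha> \<longrightarrow>
       (1 \<le> \<bar>x\<bar> \<and> \<bar>x\<bar> \<le> 1 + sqrt (\<alpha> * (1 - t)) \<longrightarrow> is_global_min (Eng t \<alpha> x) (sgn x)) \<and>
       (\<bar>x\<bar> > 1 + sqrt (\<alpha> * (1 - t)) \<longrightarrow> is_global_min (Eng t \<alpha> x) x))"
proof -
  have "0 \<le> \<alpha>" "t \<le> 1" using assms by simp_all
  have "0 \<le> sqrt (1 - t)" "sqrt (1 - t) < 1" using assms by simp_all
  then have "0 < 1 - sqrt (1 - t)" "0 < 1 + sqrt (1 - t)" by linarith+
  then have upper: "(2 - t + 2 * sqrt (1 - t)) / t\<^sup>2 < \<alpha> \<longleftrightarrow> 1 < sqrt \<alpha> * (1 - sqrt (1 - t))"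
    and lower: "(2 - t - 2 * sqrt (1 - t)) / t\<^sup>2 \<le> \<alpha> \<longleftrightarrow> 1 \<le> sqrt \<alpha> * (1 + sqrt (1 - t))"
    unfolding penalty_thresholds[OF assms(1) \<open>t \<le> 1\<close>]
    by (simp_all only: inverse_square_less_iff inverse_square_le_iff)
  have upper': "\<alpha> \<le> (2 - t + 2 * sqrt (1 - t)) / t\<^sup>2 \<longleftrightarrow> sqrt \<alpha> * (1 - sqrt (1 - t)) \<le> 1"
    using upper by (meson not_le)
  have lower': "\<alpha> < (2 - t - 2 * sqrt (1 - t)) / t\<^sup>2 \<longleftrightarrow> sqrt \<alpha> * (1 + sqrt (1 - t)) < 1"
    using lower by (meson not_le)
  show ?thesis
    using global_min_large_penalty[OF assms(4) \<open>0 \<le> \<alpha>\<close> \<open>t \<le> 1\<close>]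
      global_min_medium_penalty[OF assms(4) \<open>0 \<le> \<alpha>\<close> \<open>t \<le> 1\<close>]
      global_min_small_penalty[OF assms(4) \<open>0 \<le> \<alpha>\<close> \<open>t \<le> 1\<close>]
    unfolding upper upper' lower lower' by blast
qed

end
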